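(* Define: - $K_n=\overline{\Sigma}_c^{-1}H_n^TR_n^{-1}$ for $n=1,\dots,N$; - $\mathcal{K}=\mathrm{diag}(K_1,\dots,K_N)$ (block diagonal, of size $NM\times\sum_nM_n$); - $\mathcal{H}=\mathrm{diag}(H_1,\dots,H_N)$ (block diagonal, of size $\sum_nM_n\times NM$). Then there exist $\varepsilon_{\mathcal{K}}>0$, a deterministic time $t_{\mathcal{K}}$ and a constant $c_{\mathcal{K}}$ such that $$\mathbf{z}^T\big(\beta_t\overline{L}\otimes I_M+\alpha_t\widetilde{\mathcal{K}}\mathcal{H}\big)\mathbf{z}\ge c_{\mathcal{K}}\alpha_t\|\mathbf{z}\|^2$$ for all $t\ge t_{\mathcal{K}}$, all $\mathbf{z}\in\mathbb{R}^{NM}$, and all matrices $\widetilde{\mathcal{K}}\in\mathbb{R}^{NM\times\sum_nM_n}$ satisfying $\|\widetilde{\mathcal{K}}\mathcal{H}-\mathcal{K}\mathcal{H}\|\le\varepsilon_{\mathcal{K}}$.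
   Context: The data are as follows. - $H_n\in\mathbb{R}^{M_n\times M}$ for $n=1,\dots,N$. - $R_n\in\mathbb{R}^{M_n\times M_n}$ are symmetric positive definite. - $\overline{\Sigma}_c=\frac1N\sum_{n=1}^NH_n^TR_n^{-1}H_n$ is assumed invertible. - $\overline{L}$ is the expectation of a random $N\times N$ graph Laplacian (of simple undirected graphs on $\{1,\dots,N\}$), with $\lambda_2(\overline{L})>0$, where $\lambda_2$ is the second smallest eigenvalue. - The weights are $\alpha_t=a/(t+1)^{\tau_1}$ and $\beta_t=b/(t+1)^{\tau_2}$ with $a,b>0$, $0<\tau_2\le\tau_1\le1$, and $\tau_1>\tau_2+\frac1{2+\varepsilon_1}+\frac12$ for some $\varepsilon_1>0$ (in particular $\beta_t/\alpha_t\to\infty$). $\otimes$ is the Kronecker product and $\|\cdot\|$ the Euclidean norm or induced matrix 2-norm. *)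

theory Defs
  imports "Jordan_Normal_Form.Char_Poly" "Jordan_Normal_Form.Gauss_Jordan_Elimination"
    "HOL-Probability.Probability_Mass_Function"
begin

definition vnorm :: "real Matrix.vec \<Rightarrow> real" where
  "vnorm v = sqrt (v \<bullet> v)"

definition opnorm :: "real mat \<Rightarrow> real" where
  "opnorm A = Sup {vnorm (A *\<^sub>v v) / vnorm v | v. v \<in> carrier_vec (dim_col A)}"

definition minv :: "real mat \<Rightarrow> real mat" where
  "minv A = the (mat_inverse A)"

definition kron :: "real mat \<Rightarrow> real mat \<Rightarrow> real mat" where
  "kron A B = Matrix.mat (dim_row A * dim_row B) (dim_col A * dim_col B)
     (\<lambda>(i,j). A $$ (i div dim_row B, j div dim_col B) * B $$ (i mod dim_row B, j mod dim_col B))"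

definition simple_graph :: "nat \<Rightarrow> (nat \<times> nat) set \<Rightarrow> bool" where
  "simple_graph N E \<longleftrightarrow> E \<subseteq> {0..<N} \<times> {0..<N} \<and> sym E \<and> irrefl E"

definition laplacian :: "nat \<Rightarrow> (nat \<times> nat) set \<Rightarrow> real mat" where
  "laplacian N E = Matrix.mat N N (\<lambda>(i,j).
     if i = j then real (card {k. k < N \<and> (i,k) \<in> E})
     else if (i,j) \<in> E then -1 else 0)"

definition expected_laplacian :: "nat \<Rightarrow> (nat \<times> nat) set pmf \<Rightarrow> real mat" where
  "expected_laplacian N G = Matrix.mat N N (\<lambda>ij. measure_pmf.expectation G (\<lambda>E. laplacian N E $$ ij))"

definition sorted_eigenvalues :: "real mat \<Rightarrow> real list" where
  "sorted_eigenvalues A = sorted_list_of_multiset (proots (char_poly A))"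

definition lambda2 :: "real mat \<Rightarrow> real" where
  "lambda2 A = sorted_eigenvalues A ! 1"

definition pos_def :: "real mat \<Rightarrow> bool" where
  "pos_def A \<longleftrightarrow> (\<forall>v \<in> carrier_vec (dim_row A). v \<noteq> 0\<^sub>v (dim_row A) \<longrightarrow> v \<bullet> (A *\<^sub>v v) > 0)"

end

theory Submission
  imports Defs
begin

text \<open>Write \<open>z\<close> blockwise as \<open>1 \<otimes> y + w\<close>, with \<open>y\<close> the average of the \<open>N\<close> blocks and \<open>w\<close> the
  disagreement. The Laplacian term only sees \<open>w\<close>, and \<open>\<lambda>\<^sub>2(L) > 0\<close> gives a spectral gap
  \<open>z\<^sup>T (L \<otimes> I) z \<ge> l |w|\<^sup>2\<close>. By the definition of \<open>\<Sigma>\<close> the blocks \<open>K\<^sub>n H\<^sub>n\<close> sum to \<open>N I\<close>, so the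
  block-diagonal matrix \<open>KH\<close> satisfies \<open>z\<^sup>T KH z \<ge> 3N/4 |y|\<^sup>2 - C |w|\<^sup>2\<close>, and a perturbation of \<open>KH\<close>
  of norm at most 1/2 costs at most \<open>|z|\<^sup>2/2\<close>. As \<open>\<beta>\<^sub>t/\<alpha>\<^sub>t\<close> tends to infinity, eventually
  \<open>\<beta>\<^sub>t l \<ge> \<alpha>\<^sub>t (C + 1)\<close>, and the three estimates add up to \<open>\<alpha>\<^sub>t |z|\<^sup>2/4\<close>.\<close>

text \<open>Vectors are functions \<open>nat \<Rightarrow> real\<close> of which only the first \<open>n\<close> values matter.\<close>

definition quad_form :: "nat \<Rightarrow> real mat \<Rightarrow> (nat \<Rightarrow> real) \<Rightarrow> real" where
  "quad_form n A x = (\<Sum>i<n. \<Sum>j<n. x i * A $$ (i,j) * x j)"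

definition average :: "nat \<Rightarrow> (nat \<Rightarrow> real) \<Rightarrow> real" where
  "average n x = (\<Sum>k<n. x k) / n"

definition spread :: "nat \<Rightarrow> (nat \<Rightarrow> real) \<Rightarrow> real" where
  "spread n x = (\<Sum>k<n. (x k - average n x)\<^sup>2)"

definition laplacian_like :: "nat \<Rightarrow> real mat \<Rightarrow> bool" where
  "laplacian_like n L \<longleftrightarrow> L \<in> carrier_mat n n
     \<and> (\<forall>i<n. \<forall>j<n. L $$ (i,j) = L $$ (j,i))
     \<and> (\<forall>i<n. (\<Sum>j<n. L $$ (i,j)) = 0)
     \<and> (\<forall>x. quad_form n L x \<ge> 0)"

lemma spread_nonneg: "spread n x \<ge> 0"
  unfolding spread_def by (simp add: sum_nonneg)

lemma sum_squares_eq_average_spread: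
  assumes "n > 0"
  shows "(\<Sum>k<n. (x k)\<^sup>2) = n * (average n x)\<^sup>2 + spread n x"
proof -
  define a where "a = average n x"
  have sum: "(\<Sum>k<n. x k) = n * a"
    using assms unfolding a_def average_def by simp
  have "(\<Sum>k<n. 2 * x k * a) = 2 * a * (\<Sum>k<n. x k)"
    by (simp add: sum_distrib_left algebra_simps)
  then have "spread n x = (\<Sum>k<n. (x k)\<^sup>2) - 2 * a * (\<Sum>k<n. x k) + n * a\<^sup>2"
    unfolding spread_def a_def[symmetric] by (simp add: power2_diff sum.distrib sum_subtractf)
  then show ?thesis
    unfolding a_def[symmetric] sum by (simp add: power2_eq_square)
qed

subsection \<open>Laplacians of simple graphs\<close>

lemma laplacian_entry:
  assumes "simple_graph N E" "i < N" "j < N"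
  shows "laplacian N E $$ (i,j) =
    (if i = j then (\<Sum>k<N. if (i,k) \<in> E then 1 else 0) else 0) - (if (i,j) \<in> E then 1 else 0)"
proof -
  have "(i,i) \<notin> E" using assms(1) unfolding simple_graph_def irrefl_def by auto
  moreover have "real (card {k. k < N \<and> (i,k) \<in> E}) = (\<Sum>k<N. if (i,k) \<in> E then 1 else 0)"
  proof -
    have "{k. k < N \<and> (i,k) \<in> E} = {..<N} \<inter> {k. (i,k) \<in> E}" by auto
    then show ?thesis by (simp add: sum.If_cases)
  qed
  ultimately show ?thesis using assms unfolding laplacian_def by auto
qed

lemma laplacian_symmetric:
  assumes "simple_graph N E" "i < N" "j < N"
  shows "laplacian N E $$ (i,j) = laplacian N E $$ (j,i)"
  using assms unfolding laplacian_def simple_graph_def sym_def by auto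

lemma laplacian_row_sum:
  assumes "simple_graph N E" "i < N"
  shows "(\<Sum>j<N. laplacian N E $$ (i,j)) = 0"
proof -
  have "(\<Sum>j<N. laplacian N E $$ (i,j))
      = (\<Sum>j<N. (if i = j then (\<Sum>k<N. if (i,k) \<in> E then 1 else 0) else 0) - (if (i,j) \<in> E then 1 else 0))"
    using laplacian_entry[OF assms] by (intro sum.cong) auto
  then show ?thesis using assms(2) by (simp add: sum_subtractf)
qed

lemma quad_form_laplacian:
  assumes "simple_graph N E"
  shows "quad_form N (laplacian N E) x = (\<Sum>i<N. \<Sum>j<N. if (i,j) \<in> E then (x i - x j)\<^sup>2 / 2 else 0)"
proof -
  let ?e = "\<lambda>i j. if (i,j) \<in> E then 1 else (0::real)"
  have symE: "\<And>i j. ?e i j = ?e j i" using assms unfolding simple_graph_def sym_def by auto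
  have "quad_form N (laplacian N E) x
      = (\<Sum>i<N. \<Sum>j<N. x i * ((if i = j then (\<Sum>k<N. ?e i k) else 0) - ?e i j) * x j)"
    unfolding quad_form_def using laplacian_entry[OF assms] by (intro sum.cong) auto
  also have "\<dots> = (\<Sum>i<N. (\<Sum>j<N. x i * (if i = j then (\<Sum>k<N. ?e i k) else 0) * x j) - (\<Sum>j<N. x i * ?e i j * x j))"
    by (simp add: algebra_simps sum_subtractf)
  also have "\<dots> = (\<Sum>i<N. (\<Sum>k<N. ?e i k * x i * x i) - (\<Sum>j<N. ?e i j * x i * x j))"
  proof (intro sum.cong refl)
    fix i assume i: "i \<in> {..<N}"
    have "(\<Sum>j<N. x i * (if i = j then (\<Sum>k<N. ?e i k) else 0) * x j) = x i * (\<Sum>k<N. ?e i k) * x i"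
      using i by (simp add: if_distrib if_distribR sum.delta cong: if_cong)
    then show "(\<Sum>j<N. x i * (if i = j then (\<Sum>k<N. ?e i k) else 0) * x j) - (\<Sum>j<N. x i * ?e i j * x j)
       = (\<Sum>k<N. ?e i k * x i * x i) - (\<Sum>j<N. ?e i j * x i * x j)"
      by (simp add: sum_distrib_left sum_distrib_right algebra_simps)
  qed
  also have "\<dots> = (\<Sum>i<N. \<Sum>j<N. ?e i j * (x i * x i - x i * x j))"
    by (simp add: sum_subtractf algebra_simps)
  finally have half: "quad_form N (laplacian N E) x = (\<Sum>i<N. \<Sum>j<N. ?e i j * (x i * x i - x i * x j))" .
  have swap: "(\<Sum>i<N. \<Sum>j<N. ?e i j * (x i * x i - x i * x j)) = (\<Sum>i<N. \<Sum>j<N. ?e i j * (x j * x j - x j * x i))"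
    by (subst sum.swap) (simp add: symE)
  have "(\<Sum>i<N. \<Sum>j<N. if (i,j) \<in> E then (x i - x j)\<^sup>2 / 2 else 0)
      = (\<Sum>i<N. \<Sum>j<N. (?e i j * (x i * x i - x i * x j) + ?e i j * (x j * x j - x j * x i)) / 2)"
    by (intro sum.cong) (auto simp: power2_eq_square field_simps)
  also have "\<dots> = ((\<Sum>i<N. \<Sum>j<N. ?e i j * (x i * x i - x i * x j)) + (\<Sum>i<N. \<Sum>j<N. ?e i j * (x j * x j - x j * x i))) / 2"
    by (simp only: sum_divide_distrib[symmetric] sum.distrib)
  finally show ?thesis using half swap by simp
qed

lemma quad_form_laplacian_nonneg:
  assumes "simple_graph N E"
  shows "quad_form N (laplacian N E) x \<ge> 0"
  unfolding quad_form_laplacian[OF assms] by (intro sum_nonneg) auto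

lemma finite_set_pmf_simple_graphs:
  assumes "\<And>E. E \<in> set_pmf G \<Longrightarrow> simple_graph N E"
  shows "finite (set_pmf G)"
proof (rule finite_subset)
  show "set_pmf G \<subseteq> Pow ({0..<N} \<times> {0..<N})" using assms unfolding simple_graph_def by auto
qed auto

lemma expected_laplacian_entry:
  assumes G: "\<And>E. E \<in> set_pmf G \<Longrightarrow> simple_graph N E" and "i < N" "j < N"
  shows "expected_laplacian N G $$ (i,j) = (\<Sum>E\<in>set_pmf G. pmf G E * laplacian N E $$ (i,j))"
proof -
  have "expected_laplacian N G $$ (i,j) = measure_pmf.expectation G (\<lambda>E. laplacian N E $$ (i,j))"
    unfolding expected_laplacian_def using assms by simp
  also have "\<dots> = (\<Sum>E\<in>set_pmf G. pmf G E *\<^sub>R laplacian N E $$ (i,j))"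
    by (rule integral_measure_pmf[OF finite_set_pmf_simple_graphs[OF G]]) auto
  finally show ?thesis by simp
qed

lemma expected_laplacian_laplacian_like:
  assumes G: "\<And>E. E \<in> set_pmf G \<Longrightarrow> simple_graph N E"
  shows "laplacian_like N (expected_laplacian N G)"
proof -
  let ?L = "expected_laplacian N G"
  have row_sum: "(\<Sum>j<N. ?L $$ (i,j)) = 0" if i: "i < N" for i
  proof -
    have "(\<Sum>j<N. ?L $$ (i,j)) = (\<Sum>j<N. \<Sum>E\<in>set_pmf G. pmf G E * laplacian N E $$ (i,j))"
      using i by (simp add: expected_laplacian_entry[OF G])
    also have "\<dots> = (\<Sum>E\<in>set_pmf G. pmf G E * (\<Sum>j<N. laplacian N E $$ (i,j)))"
      by (subst sum.swap) (simp add: sum_distrib_left)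
    also have "\<dots> = 0" using i by (simp add: laplacian_row_sum[OF G])
    finally show ?thesis .
  qed
  have psd: "quad_form N ?L x \<ge> 0" for x
  proof -
    have "quad_form N ?L x = (\<Sum>i<N. \<Sum>j<N. \<Sum>E\<in>set_pmf G. pmf G E * (x i * laplacian N E $$ (i,j) * x j))"
      unfolding quad_form_def
      by (intro sum.cong refl) (simp add: expected_laplacian_entry[OF G] sum_distrib_left sum_distrib_right algebra_simps)
    also have "\<dots> = (\<Sum>E\<in>set_pmf G. pmf G E * quad_form N (laplacian N E) x)"
      unfolding quad_form_def by (simp add: sum_distrib_left sum.swap[of _ "set_pmf G"])
    also have "\<dots> \<ge> 0"
      by (intro sum_nonneg mult_nonneg_nonneg pmf_nonneg quad_form_laplacian_nonneg G)
    finally show ?thesis .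
  qed
  have "?L $$ (i,j) = ?L $$ (j,i)" if "i < N" "j < N" for i j
    using that laplacian_symmetric[OF G] by (simp add: expected_laplacian_entry[OF G] cong: sum.cong)
  then show ?thesis
    unfolding laplacian_like_def using row_sum psd by (simp add: expected_laplacian_def)
qed

subsection \<open>Spectral gap of Laplacian-like matrices\<close>

lemma mult_mat_vec_index_sum:
  assumes "A \<in> carrier_mat n m" "v \<in> carrier_vec m" "r < n"
  shows "(A *\<^sub>v v) $ r = (\<Sum>j<m. A $$ (r,j) * v $ j)"
  using assms by (simp add: scalar_prod_def row_def lessThan_atLeast0)

lemma quad_form_add_scaled:
  assumes sym: "\<And>i j. i < n \<Longrightarrow> j < n \<Longrightarrow> A $$ (i,j) = A $$ (j,i)"
  shows "quad_form n A (\<lambda>k. x k + t * y k)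
    = quad_form n A x + 2 * t * (\<Sum>i<n. \<Sum>j<n. y i * A $$ (i,j) * x j) + t\<^sup>2 * quad_form n A y"
proof -
  have cross: "(\<Sum>i<n. \<Sum>j<n. x i * A $$ (i,j) * y j) = (\<Sum>i<n. \<Sum>j<n. y i * A $$ (i,j) * x j)"
  proof -
    have "(\<Sum>i<n. \<Sum>j<n. x i * A $$ (i,j) * y j) = (\<Sum>j<n. \<Sum>i<n. x i * A $$ (i,j) * y j)"
      by (rule sum.swap)
    also have "\<dots> = (\<Sum>i<n. \<Sum>j<n. y i * A $$ (i,j) * x j)"
      using sym by (intro sum.cong refl) (simp add: mult.commute)
    finally show ?thesis .
  qed
  have "quad_form n A (\<lambda>k. x k + t * y k) = (\<Sum>i<n. \<Sum>j<n. x i * A $$ (i,j) * x j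
      + t * (y i * A $$ (i,j) * x j) + t * (x i * A $$ (i,j) * y j) + t\<^sup>2 * (y i * A $$ (i,j) * y j))"
    unfolding quad_form_def by (intro sum.cong refl) (simp add: algebra_simps power2_eq_square)
  also have "\<dots> = quad_form n A x + t * (\<Sum>i<n. \<Sum>j<n. y i * A $$ (i,j) * x j)
      + t * (\<Sum>i<n. \<Sum>j<n. x i * A $$ (i,j) * y j) + t\<^sup>2 * quad_form n A y"
    unfolding quad_form_def by (simp only: sum.distrib sum_distrib_left[symmetric])
  finally show ?thesis using cross by (simp add: algebra_simps)
qed

lemma linear_coeff_zero_if_quadratic_nonneg:
  fixes a b :: real
  assumes "\<And>t. 0 \<le> t * a + t\<^sup>2 * b"
  shows "a = 0"
proof (rule ccontr)
  assume a: "a \<noteq> 0"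
  define c where "c = \<bar>b\<bar> + 1"
  have c: "c > 0" unfolding c_def by simp
  have "c\<^sup>2 * ((- a / c) * a + (- a / c)\<^sup>2 * b) = a\<^sup>2 * (b - c)"
    using c by (simp add: field_simps power2_eq_square)
  moreover have "a\<^sup>2 * (b - c) < 0"
    using a unfolding c_def by (simp add: mult_pos_neg)
  moreover have "0 \<le> c\<^sup>2 * ((- a / c) * a + (- a / c)\<^sup>2 * b)"
    using assms[of "- a / c"] by simp
  ultimately show False by linarith
qed

lemma laplacian_like_kernel:
  assumes L: "laplacian_like n L" and q0: "quad_form n L x = 0" and r: "r < n"
  shows "(\<Sum>j<n. L $$ (r,j) * x j) = 0"
proof -
  have sym: "\<And>i j. i < n \<Longrightarrow> j < n \<Longrightarrow> L $$ (i,j) = L $$ (j,i)"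
    and psd: "\<And>y. quad_form n L y \<ge> 0"
    using L unfolding laplacian_like_def by auto
  define d where "d = (\<lambda>k. if k = r then 1 else (0::real))"
  define a where "a = (\<Sum>j<n. L $$ (r,j) * x j)"
  have "(\<Sum>i<n. \<Sum>j<n. d i * L $$ (i,j) * x j) = (\<Sum>i<n. d i * (\<Sum>j<n. L $$ (i,j) * x j))"
    by (simp add: sum_distrib_left mult.assoc)
  also have "\<dots> = (\<Sum>i<n. if i = r then (\<Sum>j<n. L $$ (i,j) * x j) else 0)"
    by (intro sum.cong refl) (simp add: d_def)
  also have "\<dots> = a" using r by (simp add: a_def)
  finally have cross: "(\<Sum>i<n. \<Sum>j<n. d i * L $$ (i,j) * x j) = a" .
  have "0 \<le> t * (2 * a) + t\<^sup>2 * quad_form n L d" for t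
  proof -
    have "quad_form n L (\<lambda>k. x k + t * d k) = t * (2 * a) + t\<^sup>2 * quad_form n L d"
      using quad_form_add_scaled[OF sym, where x = x and t = t and y = d] q0 cross by simp
    then show ?thesis using psd[of "\<lambda>k. x k + t * d k"] by simp
  qed
  then have "2 * a = 0" by (rule linear_coeff_zero_if_quadratic_nonneg)
  then show ?thesis unfolding a_def by simp
qed

lemma laplacian_like_char_poly_root_zero:
  assumes L: "laplacian_like n L" and n: "n > 0"
  shows "poly (char_poly L) 0 = 0"
proof -
  have Lc: "L \<in> carrier_mat n n" and rows: "\<And>r. r < n \<Longrightarrow> (\<Sum>j<n. L $$ (r,j)) = 0"
    using L unfolding laplacian_like_def by auto
  let ?o = "Matrix.vec n (\<lambda>_. 1::real)"
  have "?o \<noteq> 0\<^sub>v n"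
  proof
    assume "?o = 0\<^sub>v n"
    then have "?o $ 0 = 0\<^sub>v n $ 0" by simp
    then show False using n by simp
  qed
  moreover have "L *\<^sub>v ?o = 0 \<cdot>\<^sub>v ?o"
    using Lc rows by (intro eq_vecI) (auto simp: scalar_prod_def lessThan_atLeast0)
  ultimately have "eigenvector L ?o 0"
    using Lc unfolding eigenvector_def by simp
  then have "eigenvalue L 0" unfolding eigenvalue_def by blast
  then show ?thesis using eigenvalue_root_char_poly[OF Lc] by simp
qed

lemma sum_lessThan_skip:
  fixes f :: "nat \<Rightarrow> 'a::ab_group_add"
  assumes "i < n"
  shows "(\<Sum>j<n-1. f (if j < i then j else Suc j)) = (\<Sum>j<n. f j) - f i"
proof -
  let ?s = "\<lambda>j. if j < i then j else Suc j"
  have inj: "inj_on ?s {..<n-1}" by (auto simp: inj_on_def split: if_splits)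
  have "?s ` {..<n-1} = {..<n} - {i}"
  proof
    show "?s ` {..<n-1} \<subseteq> {..<n} - {i}" using assms by auto
    show "{..<n} - {i} \<subseteq> ?s ` {..<n-1}"
    proof
      fix k assume k: "k \<in> {..<n} - {i}"
      show "k \<in> ?s ` {..<n-1}"
      proof (cases "k < i")
        case True then show ?thesis using k assms by (intro image_eqI[of _ _ k]) auto
      next
        case False then have "k = ?s (k - 1)" "k - 1 < n - 1" using k by auto
        then show ?thesis by blast
      qed
    qed
  qed
  then have "(\<Sum>j<n-1. f (?s j)) = (\<Sum>k\<in>{..<n} - {i}. f k)"
    using sum.reindex[OF inj, of f] by simp
  also have "\<dots> = (\<Sum>j<n. f j) - f i" using assms by (simp add: sum_diff1)
  finally show ?thesis .
qed

text \<open>A kernel vector that is not constant, shifted to vanish at \<open>i\<close>, restricts to a kernel vector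
  of the principal minor obtained by deleting row and column \<open>i\<close>.\<close>

lemma mat_delete_char_poly_root_zero:
  fixes L :: "real mat"
  assumes Lc: "L \<in> carrier_mat n n" and rows: "\<And>r. r < n \<Longrightarrow> (\<Sum>j<n. L $$ (r,j)) = 0"
    and kern: "\<And>r. r < n \<Longrightarrow> (\<Sum>j<n. L $$ (r,j) * x j) = 0"
    and i: "i < n" and k: "k < n" "x k \<noteq> x i"
  shows "poly (char_poly (mat_delete L i i)) 0 = 0"
proof -
  let ?s = "\<lambda>j. if j < i then j else Suc j"
  define A where "A = mat_delete L i i"
  have A: "A \<in> carrier_mat (n-1) (n-1)" unfolding A_def using mat_delete_carrier[OF Lc] .
  define w where "w = Matrix.vec (n-1) (\<lambda>j. x (?s j) - x i)"
  have ki: "k \<noteq> i" using k by auto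
  have "w \<noteq> 0\<^sub>v (n-1)"
  proof
    define j where "j = (if k < i then k else k - 1)"
    have j: "j < n - 1" "?s j = k" using k ki i unfolding j_def by auto
    assume "w = 0\<^sub>v (n-1)"
    then have "w $ j = 0" using j by simp
    then show False using j k unfolding w_def by simp
  qed
  moreover have "A *\<^sub>v w = 0 \<cdot>\<^sub>v w"
  proof (rule eq_vecI)
    fix r assume "r < dim_vec (0 \<cdot>\<^sub>v w)"
    then have r: "r < n - 1" unfolding w_def by simp
    then have sr: "?s r < n" by auto
    have "(A *\<^sub>v w) $ r = (\<Sum>j<n-1. A $$ (r,j) * w $ j)"
      by (rule mult_mat_vec_index_sum[OF A _ r]) (simp add: w_def)
    also have "\<dots> = (\<Sum>j<n-1. L $$ (?s r, ?s j) * (x (?s j) - x i))"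
      using r Lc by (intro sum.cong refl) (simp add: w_def A_def mat_delete_def)
    also have "\<dots> = (\<Sum>j<n. L $$ (?s r, j) * (x j - x i))"
      using sum_lessThan_skip[OF i, of "\<lambda>j. L $$ (?s r, j) * (x j - x i)"] by simp
    also have "\<dots> = (\<Sum>j<n. L $$ (?s r, j) * x j) - x i * (\<Sum>j<n. L $$ (?s r, j))"
      by (simp add: algebra_simps sum_subtractf sum_distrib_left)
    also have "\<dots> = 0" using kern[OF sr] rows[OF sr] by simp
    finally show "(A *\<^sub>v w) $ r = (0 \<cdot>\<^sub>v w) $ r" using r unfolding w_def by simp
  qed (use A in \<open>simp add: w_def\<close>)
  ultimately have "eigenvector A w 0"
    using A unfolding eigenvector_def w_def by simp
  then have "eigenvalue A 0" unfolding eigenvalue_def by blast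
  then show ?thesis using eigenvalue_root_char_poly[OF A] unfolding A_def by simp
qed

lemma char_poly_nonzero:
  assumes "A \<in> carrier_mat n n"
  shows "char_poly A \<noteq> 0"
  using degree_monic_char_poly[OF assms] by auto

text \<open>Zero is a double root: it is a root of the characteristic polynomial and, via
  \<open>pderiv_char_poly\<close>, of its derivative, the sum of the characteristic polynomials of the
  principal minors.\<close>

lemma laplacian_like_zero_root_multiplicity:
  assumes L: "laplacian_like n L" and q0: "quad_form n L x = 0"
    and ij: "i < n" "j < n" "x i \<noteq> x j"
  shows "count (proots (char_poly L)) 0 \<ge> 2"
proof -
  have Lc: "L \<in> carrier_mat n n" and rows: "\<And>r. r < n \<Longrightarrow> (\<Sum>j<n. L $$ (r,j)) = 0"
    using L unfolding laplacian_like_def by auto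
  define p where "p = char_poly L"
  have p0: "p \<noteq> 0" unfolding p_def by (rule char_poly_nonzero[OF Lc])
  have root0: "poly p 0 = 0"
    unfolding p_def using ij by (intro laplacian_like_char_poly_root_zero[OF L]) auto
  have "poly (char_poly (mat_delete L m m)) 0 = 0" if m: "m < n" for m
  proof -
    obtain k where "k < n" "x k \<noteq> x m" using ij by (cases "x i = x m") auto
    then show ?thesis
      using mat_delete_char_poly_root_zero[OF Lc rows laplacian_like_kernel[OF L q0] m] by blast
  qed
  then have root1: "poly (pderiv p) 0 = 0"
    unfolding p_def pderiv_char_poly[OF Lc] poly_sum by simp
  have "pderiv p \<noteq> 0"
    using degree_monic_char_poly[OF Lc] ij unfolding p_def by (auto simp: pderiv_eq_0_iff)
  then have "order 0 (pderiv p) \<noteq> 0" using root1 order_root by blast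
  then show ?thesis
    using order_pderiv[OF p0 root0] count_proots[OF p0] unfolding p_def by simp
qed

lemma laplacian_like_char_poly_roots_nonneg:
  assumes L: "laplacian_like n L" and r: "r \<in># proots (char_poly L)"
  shows "r \<ge> 0"
proof -
  have Lc: "L \<in> carrier_mat n n" and psd: "\<And>y. quad_form n L y \<ge> 0"
    using L unfolding laplacian_like_def by auto
  have "poly (char_poly L) r = 0"
    using r char_poly_nonzero[OF Lc] by (simp add: count_proots order_root)
  then have "eigenvalue L r" using eigenvalue_root_char_poly[OF Lc] by simp
  then obtain v where v: "v \<in> carrier_vec n" "v \<noteq> 0\<^sub>v n" "L *\<^sub>v v = r \<cdot>\<^sub>v v"
    using Lc unfolding eigenvalue_def eigenvector_def by auto
  have "quad_form n L (\<lambda>k. v $ k) = (\<Sum>i<n. v $ i * (L *\<^sub>v v) $ i)"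
    unfolding quad_form_def using v(1)
    by (simp add: mult_mat_vec_index_sum[OF Lc] sum_distrib_left mult.assoc)
  also have "\<dots> = r * (\<Sum>i<n. (v $ i)\<^sup>2)"
    using v by (simp add: sum_distrib_left power2_eq_square algebra_simps)
  finally have "r * (\<Sum>i<n. (v $ i)\<^sup>2) \<ge> 0" using psd[of "\<lambda>k. v $ k"] by simp
  moreover obtain s where "s < n" "v $ s \<noteq> 0"
  proof (rule ccontr)
    assume "\<not> thesis"
    then have "v = 0\<^sub>v n" using that v(1) by (intro eq_vecI) auto
    then show False using v(2) by simp
  qed
  then have "(\<Sum>i<n. (v $ i)\<^sup>2) > 0" by (intro sum_pos2[of _ s]) auto
  ultimately show "r \<ge> 0" by (simp add: zero_le_mult_iff)
qed

lemma sorted_list_of_multiset_nth_one_eq_zero: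
  fixes P :: "real multiset"
  assumes nonneg: "\<And>r. r \<in># P \<Longrightarrow> r \<ge> 0" and zero: "count P 0 \<ge> 2"
  shows "sorted_list_of_multiset P ! 1 = 0"
proof -
  define s where "s = sorted_list_of_multiset P"
  have ms: "mset s = P" and so: "sorted s" unfolding s_def by auto
  obtain a t where st: "s = a # t" using zero ms by (cases s) auto
  have cnt: "count P 0 = count (mset t) 0 + (if a = 0 then 1 else 0)" using ms st by auto
  have "count P 0 \<le> count (mset t) 0 + 1" unfolding cnt by simp
  then have "count (mset t) 0 > 0" using zero by linarith
  then have "0 \<in># mset t" using count_greater_zero_iff by metis
  then have "0 \<in> set t" by simp
  then obtain b t' where tt: "t = b # t'" by (cases t) auto
  have "b \<le> 0" using so st tt \<open>0 \<in> set t\<close> by auto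
  moreover have "b \<ge> 0" using nonneg ms st tt by auto
  ultimately show ?thesis unfolding s_def[symmetric] using st tt by simp
qed

text \<open>If the form vanished at a nonconstant vector, zero would be a double root of the
  characteristic polynomial; all roots being nonnegative, \<open>lambda2\<close> would then be zero.\<close>

lemma laplacian_like_quad_form_pos:
  assumes n: "n \<ge> 2" and L: "laplacian_like n L" and lam: "lambda2 L > 0"
    and x: "(\<Sum>k<n. x k) = 0" "k < n" "x k \<noteq> 0"
  shows "quad_form n L x > 0"
proof (rule ccontr)
  assume "\<not> ?thesis"
  moreover have "quad_form n L x \<ge> 0" using L unfolding laplacian_like_def by simp
  ultimately have q0: "quad_form n L x = 0" by simp
  obtain i where i: "i < n" "x i \<noteq> x k"
  proof (rule ccontr)
    assume "\<not> thesis"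
    then have "\<And>i. i < n \<Longrightarrow> x i = x k" using that by blast
    then have "(\<Sum>i<n. x i) = n * x k" by simp
    then show False using x n by simp
  qed
  have "lambda2 L = 0"
    unfolding lambda2_def sorted_eigenvalues_def
    using laplacian_like_char_poly_roots_nonneg[OF L]
      laplacian_like_zero_root_multiplicity[OF L q0 i(1) x(2) i(2)]
    by (rule sorted_list_of_multiset_nth_one_eq_zero)
  then show False using lam by simp
qed

lemma laplacian_like_quad_form_shift:
  fixes x :: "nat \<Rightarrow> real"
  assumes L: "laplacian_like n L"
  shows "quad_form n L (\<lambda>k. x k - m) = quad_form n L x"
proof -
  have sym: "\<And>i j. i < n \<Longrightarrow> j < n \<Longrightarrow> L $$ (i,j) = L $$ (j,i)"
    and rows: "\<And>i. i < n \<Longrightarrow> (\<Sum>j<n. L $$ (i,j)) = 0"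
    using L unfolding laplacian_like_def by auto
  have "(\<Sum>i<n. \<Sum>j<n. 1 * L $$ (i,j) * x j) = (\<Sum>j<n. (\<Sum>i<n. L $$ (j,i)) * x j)"
    using sym by (subst sum.swap) (simp add: sum_distrib_right)
  also have "\<dots> = 0" using rows by simp
  finally have cross: "(\<Sum>i<n. \<Sum>j<n. 1 * L $$ (i,j) * x j) = 0" .
  have ones: "quad_form n L (\<lambda>_. 1) = 0" unfolding quad_form_def using rows by simp
  show ?thesis
    using quad_form_add_scaled[OF sym, where x = x and t = "- m" and y = "\<lambda>_. 1"] cross ones by simp
qed

lemma continuous_on_coordinate [continuous_intros]: "continuous_on S (\<lambda>x::nat \<Rightarrow> real. x k)"
  by (rule continuous_on_subset[OF continuous_on_product_coordinates]) auto

lemma compact_zero_sum_sphere: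
  "compact {x::nat \<Rightarrow> real. (\<forall>k\<ge>n. x k = 0) \<and> (\<Sum>k<n. x k) = 0 \<and> (\<Sum>k<n. (x k)\<^sup>2) = \<rho>}"
  (is "compact ?S")
proof -
  define B where "B = PiE UNIV (\<lambda>k. if k < n then {- sqrt \<rho>..sqrt \<rho>} else {0::real})"
  have "compactin (product_topology (\<lambda>_. euclidean) UNIV) B"
    unfolding B_def by (subst compactin_PiE) (auto simp: compactin_euclidean_iff)
  then have cB: "compact B" by (simp add: euclidean_product_topology compactin_euclidean_iff)
  have clS: "closed ?S"
  proof -
    have "?S = (\<Inter>k\<in>{n..}. {x. x k = 0}) \<inter> {x. (\<Sum>k<n. x k) = 0} \<inter> {x. (\<Sum>k<n. (x k)\<^sup>2) = \<rho>}"
      by auto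
    moreover have "closed (\<Inter>k\<in>{n..}. {x::nat \<Rightarrow> real. x k = 0})"
      by (intro closed_INT ballI closed_Collect_eq continuous_intros)
    ultimately show ?thesis by (auto intro!: closed_Int closed_Collect_eq continuous_intros)
  qed
  have SB: "?S \<subseteq> B"
  proof
    fix x assume x: "x \<in> ?S"
    have "x k \<in> {- sqrt \<rho>..sqrt \<rho>}" if "k < n" for k
    proof -
      have "(x k)\<^sup>2 \<le> (\<Sum>m<n. (x m)\<^sup>2)" using that by (intro member_le_sum) auto
      then have "\<bar>x k\<bar> \<le> sqrt \<rho>" using x by (intro real_le_rsqrt) simp
      then show ?thesis by (simp add: abs_le_iff)
    qed
    then show "x \<in> B" using x unfolding B_def by auto
  qed
  show ?thesis using compact_Int_closed[OF cB clS] SB by (simp add: Int_absorb1)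
qed

lemma laplacian_like_min_on_zero_sum_sphere:
  assumes n: "n \<ge> 2" and L: "laplacian_like n L" and lam: "lambda2 L > 0"
  obtains m where "m > 0"
    "\<And>u. (\<forall>k\<ge>n. u k = 0) \<Longrightarrow> (\<Sum>k<n. u k) = 0 \<Longrightarrow> (\<Sum>k<n. (u k)\<^sup>2) = 2 \<Longrightarrow> m \<le> quad_form n L u"
proof -
  define S where "S = {x::nat \<Rightarrow> real. (\<forall>k\<ge>n. x k = 0) \<and> (\<Sum>k<n. x k) = 0 \<and> (\<Sum>k<n. (x k)\<^sup>2) = 2}"
  define x0 where "x0 = (\<lambda>k::nat. if k = 0 then 1 else if k = 1 then -1 else (0::real))"
  have "(\<Sum>k<n. x0 k) = (\<Sum>k\<in>{0,1}. x0 k)"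
    by (rule sum.mono_neutral_right) (use n in \<open>auto simp: x0_def\<close>)
  moreover have "(\<Sum>k<n. (x0 k)\<^sup>2) = (\<Sum>k\<in>{0,1}. (x0 k)\<^sup>2)"
    by (rule sum.mono_neutral_right) (use n in \<open>auto simp: x0_def\<close>)
  ultimately have "x0 \<in> S" unfolding S_def using n by (auto simp: x0_def)
  moreover have "continuous_on S (quad_form n L)"
    unfolding quad_form_def by (intro continuous_intros)
  ultimately obtain s where s: "s \<in> S" and min: "\<And>u. u \<in> S \<Longrightarrow> quad_form n L s \<le> quad_form n L u"
    using continuous_attains_inf[OF compact_zero_sum_sphere[of n 2, folded S_def]] by blast
  obtain k where "k < n" "s k \<noteq> 0"
  proof (rule ccontr)
    assume "\<not> thesis"
    then have "\<And>k. k < n \<Longrightarrow> s k = 0" using that by blast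
    then have "(\<Sum>k<n. (s k)\<^sup>2) = 0" by simp
    then show False using s unfolding S_def by simp
  qed
  then have "quad_form n L s > 0"
    using s unfolding S_def by (intro laplacian_like_quad_form_pos[OF n L lam]) auto
  then show ?thesis using that min unfolding S_def by blast
qed

lemma laplacian_like_spectral_gap:
  assumes n: "n \<ge> 2" and L: "laplacian_like n L" and lam: "lambda2 L > 0"
  obtains l where "l > 0" "\<And>x. quad_form n L x \<ge> l * spread n x"
proof -
  obtain m where m: "m > 0"
    and min: "\<And>u. (\<forall>k\<ge>n. u k = 0) \<Longrightarrow> (\<Sum>k<n. u k) = 0 \<Longrightarrow> (\<Sum>k<n. (u k)\<^sup>2) = 2 \<Longrightarrow> m \<le> quad_form n L u"
    using laplacian_like_min_on_zero_sum_sphere[OF n L lam] by blast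
  show ?thesis
  proof
    show "m / 2 > 0" using m by simp
    fix x :: "nat \<Rightarrow> real"
    define w where "w = (\<lambda>k. if k < n then x k - average n x else 0)"
    have qw: "quad_form n L w = quad_form n L x"
      using laplacian_like_quad_form_shift[OF L, of x "average n x"]
      unfolding quad_form_def w_def by simp
    have spread_w: "spread n x = (\<Sum>k<n. (w k)\<^sup>2)" unfolding spread_def w_def by simp
    have w_sum: "(\<Sum>k<n. w k) = 0"
      using n by (simp add: w_def sum_subtractf average_def)
    show "quad_form n L x \<ge> m / 2 * spread n x"
    proof (cases "spread n x = 0")
      case True then show ?thesis using L unfolding laplacian_like_def by simp
    next
      case False
      then have sp: "spread n x > 0" using spread_nonneg[of n x] by simp
      define c where "c = sqrt (2 / spread n x)"
      have c2: "c\<^sup>2 = 2 / spread n x" unfolding c_def using sp by simp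
      have "(\<Sum>k<n. (c * w k)\<^sup>2) = c\<^sup>2 * spread n x"
        unfolding spread_w by (simp add: sum_distrib_left power_mult_distrib)
      moreover have "(\<Sum>k<n. c * w k) = 0"
        using w_sum by (simp add: sum_distrib_left[symmetric])
      ultimately have "m \<le> quad_form n L (\<lambda>k. c * w k)"
        using c2 sp by (intro min) (simp_all add: w_def)
      also have "quad_form n L (\<lambda>k. c * w k) = c\<^sup>2 * quad_form n L w"
        unfolding quad_form_def by (simp add: sum_distrib_left power2_eq_square algebra_simps)
      finally show ?thesis using qw c2 sp by (simp add: field_simps)
    qed
  qed
qed

subsection \<open>Quadratic forms, Euclidean norm and operator norm\<close>

lemma quad_form_add:
  assumes "A \<in> carrier_mat n n" "B \<in> carrier_mat n n"
  shows "quad_form n (A + B) x = quad_form n A x + quad_form n B x"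
  unfolding quad_form_def using assms
  by (simp add: carrier_matD algebra_simps sum.distrib)

lemma quad_form_minus:
  assumes "A \<in> carrier_mat n n" "B \<in> carrier_mat n n"
  shows "quad_form n (A - B) x = quad_form n A x - quad_form n B x"
  unfolding quad_form_def using assms
  by (simp add: carrier_matD algebra_simps sum_subtractf)

lemma quad_form_smult:
  assumes "A \<in> carrier_mat n n"
  shows "quad_form n (a \<cdot>\<^sub>m A) x = a * quad_form n A x"
  unfolding quad_form_def using assms
  by (simp add: carrier_matD sum_distrib_left algebra_simps)

lemma scalar_prod_mult_mat_vec_eq_quad_form:
  assumes A: "A \<in> carrier_mat n n" and z: "z \<in> carrier_vec n"
  shows "z \<bullet> (A *\<^sub>v z) = quad_form n A (\<lambda>i. z $ i)"
proof -
  have "z \<bullet> (A *\<^sub>v z) = (\<Sum>i<n. z $ i * (A *\<^sub>v z) $ i)"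
    using A z by (simp add: scalar_prod_def lessThan_atLeast0)
  also have "\<dots> = quad_form n A (\<lambda>i. z $ i)"
    unfolding quad_form_def using A z
    by (simp add: carrier_matD scalar_prod_def lessThan_atLeast0 sum_distrib_left mult.assoc)
  finally show ?thesis .
qed

lemma scalar_prod_smult_add_mult_mat_vec:
  assumes K: "K \<in> carrier_mat n n" and X: "X \<in> carrier_mat n n" and P: "P \<in> carrier_mat n n"
    and z: "z \<in> carrier_vec n"
  shows "z \<bullet> ((\<beta> \<cdot>\<^sub>m K + \<alpha> \<cdot>\<^sub>m X) *\<^sub>v z) = \<beta> * quad_form n K (\<lambda>i. z $ i)
    + \<alpha> * quad_form n P (\<lambda>i. z $ i) + \<alpha> * quad_form n (X - P) (\<lambda>i. z $ i)"
proof -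
  have "z \<bullet> ((\<beta> \<cdot>\<^sub>m K + \<alpha> \<cdot>\<^sub>m X) *\<^sub>v z) = quad_form n (\<beta> \<cdot>\<^sub>m K + \<alpha> \<cdot>\<^sub>m X) (\<lambda>i. z $ i)"
    using K X z by (intro scalar_prod_mult_mat_vec_eq_quad_form) auto
  also have "\<dots> = \<beta> * quad_form n K (\<lambda>i. z $ i) + \<alpha> * quad_form n X (\<lambda>i. z $ i)"
    using K X by (simp add: quad_form_add[of _ n] quad_form_smult)
  also have "quad_form n X (\<lambda>i. z $ i) = quad_form n P (\<lambda>i. z $ i) + quad_form n (X - P) (\<lambda>i. z $ i)"
    using quad_form_minus[OF X P] by simp
  finally show ?thesis by (simp add: distrib_left add.assoc)
qed

lemma vnorm_nonneg: "vnorm v \<ge> 0"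
  unfolding vnorm_def scalar_prod_def by (simp add: sum_nonneg)

lemma vnorm_square:
  assumes "v \<in> carrier_vec n"
  shows "(vnorm v)\<^sup>2 = (\<Sum>i<n. (v $ i)\<^sup>2)"
  using assms unfolding vnorm_def scalar_prod_def
  by (simp add: sum_nonneg lessThan_atLeast0 power2_eq_square)

lemma abs_scalar_prod_le_vnorm:
  assumes v: "v \<in> carrier_vec n" and w: "w \<in> carrier_vec n"
  shows "\<bar>v \<bullet> w\<bar> \<le> vnorm v * vnorm w"
proof (rule power2_le_imp_le)
  have "v \<bullet> w = (\<Sum>i<n. v $ i * w $ i)"
    using w by (simp add: scalar_prod_def lessThan_atLeast0)
  then show "\<bar>v \<bullet> w\<bar>\<^sup>2 \<le> (vnorm v * vnorm w)\<^sup>2"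
    unfolding power_mult_distrib vnorm_square[OF v] vnorm_square[OF w]
    using Cauchy_Schwarz_ineq_sum by simp
qed (simp add: vnorm_nonneg)

lemma vnorm_mult_mat_vec_le_frobenius:
  assumes A: "A \<in> carrier_mat n m" and v: "v \<in> carrier_vec m"
  shows "vnorm (A *\<^sub>v v) \<le> sqrt (\<Sum>i<n. \<Sum>j<m. (A $$ (i,j))\<^sup>2) * vnorm v"
proof (rule power2_le_imp_le)
  have "(vnorm (A *\<^sub>v v))\<^sup>2 = (\<Sum>i<n. (\<Sum>j<m. A $$ (i,j) * v $ j)\<^sup>2)"
    using A v by (simp add: vnorm_square[of _ n] carrier_matD scalar_prod_def lessThan_atLeast0)
  also have "\<dots> \<le> (\<Sum>i<n. (\<Sum>j<m. (A $$ (i,j))\<^sup>2) * (\<Sum>j<m. (v $ j)\<^sup>2))"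
    by (intro sum_mono Cauchy_Schwarz_ineq_sum)
  also have "\<dots> = (sqrt (\<Sum>i<n. \<Sum>j<m. (A $$ (i,j))\<^sup>2) * vnorm v)\<^sup>2"
    by (simp add: power_mult_distrib sum_nonneg vnorm_square[OF v] sum_distrib_right)
  finally show "(vnorm (A *\<^sub>v v))\<^sup>2 \<le> (sqrt (\<Sum>i<n. \<Sum>j<m. (A $$ (i,j))\<^sup>2) * vnorm v)\<^sup>2" .
qed (simp add: sum_nonneg vnorm_nonneg)

text \<open>The Frobenius bound shows that the set whose supremum defines \<open>opnorm\<close> is bounded above.\<close>

lemma vnorm_mult_mat_vec_le_opnorm:
  assumes A: "A \<in> carrier_mat n m" and v: "v \<in> carrier_vec m"
  shows "vnorm (A *\<^sub>v v) \<le> opnorm A * vnorm v"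
proof (cases "vnorm v = 0")
  case True
  then show ?thesis using vnorm_mult_mat_vec_le_frobenius[OF A v] vnorm_nonneg[of "A *\<^sub>v v"] by simp
next
  case False
  then have vpos: "vnorm v > 0" using vnorm_nonneg[of v] by simp
  define S where "S = {vnorm (A *\<^sub>v u) / vnorm u | u. u \<in> carrier_vec (dim_col A)}"
  have "bdd_above S"
  proof (rule bdd_aboveI)
    fix s assume "s \<in> S"
    then obtain u where u: "u \<in> carrier_vec m" "s = vnorm (A *\<^sub>v u) / vnorm u"
      using A unfolding S_def by auto
    show "s \<le> sqrt (\<Sum>i<n. \<Sum>j<m. (A $$ (i,j))\<^sup>2)"
      using u vnorm_mult_mat_vec_le_frobenius[OF A u(1)] vnorm_nonneg[of u]
      by (cases "vnorm u = 0") (simp_all add: sum_nonneg divide_le_eq)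
  qed
  moreover have "vnorm (A *\<^sub>v v) / vnorm v \<in> S" unfolding S_def using v A by auto
  ultimately have "vnorm (A *\<^sub>v v) / vnorm v \<le> opnorm A"
    unfolding opnorm_def S_def[symmetric] by (rule cSup_upper[rotated])
  then show ?thesis using vpos by (simp add: divide_le_eq)
qed

lemma scalar_prod_mult_mat_vec_ge_neg_opnorm:
  assumes A: "A \<in> carrier_mat n n" and z: "z \<in> carrier_vec n"
  shows "z \<bullet> (A *\<^sub>v z) \<ge> - (opnorm A * (vnorm z)\<^sup>2)"
proof -
  have "\<bar>z \<bullet> (A *\<^sub>v z)\<bar> \<le> vnorm z * vnorm (A *\<^sub>v z)"
    using A z by (intro abs_scalar_prod_le_vnorm) auto
  also have "\<dots> \<le> vnorm z * (opnorm A * vnorm z)"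
    by (intro mult_left_mono vnorm_mult_mat_vec_le_opnorm[OF A z] vnorm_nonneg)
  finally show ?thesis by (simp add: power2_eq_square algebra_simps)
qed

subsection \<open>Block-diagonal and Kronecker structure\<close>

lemma diag_block_mat_index:
  assumes "\<forall>A\<in>set Ds. A \<in> carrier_mat M M" "i < length Ds * M" "j < length Ds * M"
  shows "diag_block_mat Ds $$ (i,j) =
    (if i div M = j div M then (Ds ! (i div M)) $$ (i mod M, j mod M) else 0)"
  using assms
proof (induction Ds arbitrary: i j)
  case Nil then show ?case by simp
next
  case (Cons A Ds)
  let ?D = "diag_block_mat Ds"
  have A: "A \<in> carrier_mat M M" using Cons.prems by simp
  have D: "dim_row ?D = length Ds * M" "dim_col ?D = length Ds * M"
    using Cons.prems(1) unfolding dim_diag_block_mat by (induction Ds) auto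
  have M: "M > 0" using Cons.prems(2) by (cases M) auto
  have e: "diag_block_mat (A # Ds) $$ (i,j) = (if i < M then if j < M then A $$ (i, j)
           else 0 else if j < M then 0 else ?D $$ (i - M, j - M))"
    using Cons.prems A D by (simp add: Let_def)
  consider "i < M" "j < M" | "i < M" "\<not> j < M" | "\<not> i < M" "j < M" | "\<not> i < M" "\<not> j < M"
    by blast
  then show ?case
  proof cases
    case 4
    have "i - M < length Ds * M" "j - M < length Ds * M" using Cons.prems 4 by auto
    then have "?D $$ (i - M, j - M) = (if (i-M) div M = (j-M) div M
        then (Ds ! ((i-M) div M)) $$ ((i-M) mod M, (j-M) mod M) else 0)"
      using Cons.IH Cons.prems(1) by simp
    moreover have "i div M = Suc ((i-M) div M)" "j div M = Suc ((j-M) div M)"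
      "i mod M = (i-M) mod M" "j mod M = (j-M) mod M"
      using 4 M by (simp_all add: le_div_geq le_mod_geq)
    ultimately show ?thesis using e 4 by simp
  qed (use e M in \<open>auto simp: le_div_geq\<close>)
qed

lemma diag_block_mat_map_carrier:
  assumes "\<And>k. k \<in> set xs \<Longrightarrow> F k \<in> carrier_mat (r k) (c k)"
  shows "diag_block_mat (map F xs) \<in> carrier_mat (sum_list (map r xs)) (sum_list (map c xs))"
  using assms unfolding carrier_mat_def dim_diag_block_mat by (induction xs) auto

lemma diag_block_mat_map_mult:
  assumes "\<And>k. k \<in> set xs \<Longrightarrow> K k \<in> carrier_mat M (m k) \<and> H k \<in> carrier_mat (m k) M"
  shows "diag_block_mat (map K xs) * diag_block_mat (map H xs) = diag_block_mat (map (\<lambda>k. K k * H k) xs)"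
  using assms
proof (induction xs)
  case Nil then show ?case by (auto intro!: eq_matI)
next
  case (Cons a xs)
  let ?DK = "diag_block_mat (map K xs)"
  let ?DH = "diag_block_mat (map H xs)"
  let ?DKH = "diag_block_mat (map (\<lambda>k. K k * H k) xs)"
  define s where "s = sum_list (map m xs)"
  define t where "t = sum_list (map (\<lambda>_. M) xs)"
  have Ka: "K a \<in> carrier_mat M (m a)" and Ha: "H a \<in> carrier_mat (m a) M" using Cons.prems by auto
  have DK: "?DK \<in> carrier_mat t s" and DH: "?DH \<in> carrier_mat s t"
    and DKH: "?DKH \<in> carrier_mat t t"
    unfolding s_def t_def using Cons.prems
    by (auto intro!: diag_block_mat_map_carrier mult_carrier_mat)
  have IH: "?DK * ?DH = ?DKH" using Cons by auto
  have "diag_block_mat (map K (a # xs)) * diag_block_mat (map H (a # xs))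
    = four_block_mat (K a) (0\<^sub>m M s) (0\<^sub>m t (m a)) ?DK * four_block_mat (H a) (0\<^sub>m (m a) t) (0\<^sub>m s M) ?DH"
    using Ka Ha DK DH by (simp add: Let_def)
  also have "\<dots> = four_block_mat (K a * H a + 0\<^sub>m M s * 0\<^sub>m s M) (K a * 0\<^sub>m (m a) t + 0\<^sub>m M s * ?DH)
     (0\<^sub>m t (m a) * H a + ?DK * 0\<^sub>m s M) (0\<^sub>m t (m a) * 0\<^sub>m (m a) t + ?DK * ?DH)"
    by (rule mult_four_block_mat[OF Ka _ _ DK Ha _ _ DH]) auto
  also have "\<dots> = four_block_mat (K a * H a) (0\<^sub>m M t) (0\<^sub>m t M) ?DKH"
    using Ka Ha DK DH IH DKH by (simp add: Let_def)
  also have "\<dots> = diag_block_mat (map (\<lambda>k. K k * H k) (a # xs))"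
    using Ka Ha DKH by (simp add: Let_def)
  finally show ?case .
qed

lemma kron_one_index:
  assumes "A \<in> carrier_mat N N" "i < N * M" "j < N * M"
  shows "kron A (1\<^sub>m M) $$ (i,j) = A $$ (i div M, j div M) * (if i mod M = j mod M then 1 else 0)"
proof -
  have "M > 0" using assms by (cases M) auto
  then show ?thesis using assms unfolding kron_def by simp
qed

lemma sum_lessThan_mult:
  fixes f :: "nat \<Rightarrow> 'a::comm_monoid_add"
  shows "(\<Sum>i<N * M. f i) = (\<Sum>k<N. \<Sum>c<M. f (k * M + c))"
proof (induction N)
  case (Suc N)
  have "{..<Suc N * M} = {..<N * M} \<union> {N * M..<N * M + M}" by auto
  then have "(\<Sum>i<Suc N * M. f i) = (\<Sum>i<N * M. f i) + (\<Sum>i\<in>{N * M..<N * M + M}. f i)"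
    by (simp add: sum.union_disjoint ivl_disj_int)
  also have "(\<Sum>i\<in>{N * M..<N * M + M}. f i) = (\<Sum>c<M. f (N * M + c))"
    using sum.shift_bounds_nat_ivl[of f 0 "N * M" M]
    by (simp add: lessThan_atLeast0 add.commute)
  finally show ?case using Suc by simp
qed simp

lemma block_index_less:
  fixes k c N M :: nat
  assumes "k < N" "c < M"
  shows "k * M + c < N * M"
proof -
  have "k * M + c < (k + 1) * M" using assms by simp
  also have "\<dots> \<le> N * M" using assms by (intro mult_right_mono) auto
  finally show ?thesis .
qed

lemma quad_form_kron_one:
  assumes L: "L \<in> carrier_mat N N"
  shows "quad_form (N * M) (kron L (1\<^sub>m M)) x = (\<Sum>c<M. quad_form N L (\<lambda>k. x (k * M + c)))"
proof -
  have "quad_form (N * M) (kron L (1\<^sub>m M)) x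
    = (\<Sum>k<N. \<Sum>c<M. \<Sum>l<N. \<Sum>d<M. x (k*M+c) * kron L (1\<^sub>m M) $$ (k*M+c, l*M+d) * x (l*M+d))"
    unfolding quad_form_def by (simp add: sum_lessThan_mult[of _ N M])
  also have "\<dots> = (\<Sum>k<N. \<Sum>c<M. \<Sum>l<N. x (k*M+c) * L $$ (k,l) * x (l*M+c))"
    using L by (intro sum.cong refl)
      (simp add: kron_one_index block_index_less if_distrib if_distribR sum.delta cong: if_cong)
  also have "\<dots> = (\<Sum>c<M. quad_form N L (\<lambda>k. x (k * M + c)))"
    unfolding quad_form_def by (rule sum.swap)
  finally show ?thesis .
qed

lemma quad_form_diag_block_mat:
  assumes D: "\<And>k. k < N \<Longrightarrow> D k \<in> carrier_mat M M"
  shows "quad_form (N * M) (diag_block_mat (map D [0..<N])) x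
    = (\<Sum>k<N. quad_form M (D k) (\<lambda>c. x (k * M + c)))"
proof -
  let ?P = "diag_block_mat (map D [0..<N])"
  have P: "?P $$ (k*M+c, l*M+d) = (if k = l then D k $$ (c,d) else 0)"
    if "k < N" "c < M" "l < N" "d < M" for k c l d
    using that D by (subst diag_block_mat_index[of _ M]) (auto simp: block_index_less)
  have "quad_form (N * M) ?P x = (\<Sum>k<N. \<Sum>c<M. \<Sum>l<N. \<Sum>d<M. x (k*M+c) * ?P $$ (k*M+c, l*M+d) * x (l*M+d))"
    unfolding quad_form_def by (simp add: sum_lessThan_mult[of _ N M])
  also have "\<dots> = (\<Sum>k<N. \<Sum>c<M. \<Sum>l<N. if l = k then (\<Sum>d<M. x (k*M+c) * D k $$ (c,d) * x (k*M+d)) else 0)"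
    by (intro sum.cong refl) (auto simp: P)
  also have "\<dots> = (\<Sum>k<N. \<Sum>c<M. \<Sum>d<M. x (k*M+c) * D k $$ (c,d) * x (k*M+d))"
    by simp
  also have "\<dots> = (\<Sum>k<N. quad_form M (D k) (\<lambda>c. x (k * M + c)))"
    unfolding quad_form_def ..
  finally show ?thesis .
qed

subsection \<open>The consensus estimate\<close>

lemma abs_mult_le_weighted_squares:
  fixes a b e :: real
  assumes "e > 0"
  shows "\<bar>a * b\<bar> \<le> (e * a\<^sup>2 + b\<^sup>2 / e) / 2"
proof -
  have "0 \<le> (e * \<bar>a\<bar> - \<bar>b\<bar>)\<^sup>2" by simp
  then have "2 * e * \<bar>a\<bar> * \<bar>b\<bar> \<le> e\<^sup>2 * a\<^sup>2 + b\<^sup>2"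
    by (simp add: power2_eq_square algebra_simps)
  then show ?thesis
    using assms by (simp add: field_simps power2_eq_square abs_mult mult.commute mult.left_commute)
qed

lemma mult_ge_neg_bound:
  fixes x a b e B :: real
  assumes "\<bar>x\<bar> \<le> B" "\<bar>a * b\<bar> \<le> e"
  shows "a * x * b \<ge> - (B * e)"
proof -
  have "\<bar>a * x * b\<bar> = \<bar>x\<bar> * \<bar>a * b\<bar>" by (simp add: abs_mult)
  also have "\<dots> \<le> B * e" using assms by (intro mult_mono) auto
  finally show ?thesis by linarith
qed

text \<open>Expanding \<open>(y\<^sub>1 + w\<^sub>1) \<delta> (y\<^sub>2 + w\<^sub>2)\<close>, the three terms involving \<open>w\<close> are bounded by
  weighted AM-GM, with small weight \<open>e\<close> on the \<open>y\<close>-squares.\<close>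

lemma perturbed_product_lower_bound:
  fixes y1 y2 w1 w2 \<delta> B e :: real
  assumes \<delta>: "\<bar>\<delta>\<bar> \<le> B" and e: "e > 0"
  shows "(y1 + w1) * \<delta> * (y2 + w2) \<ge> y1 * \<delta> * y2
           - (B * e * ((y1\<^sup>2 + y2\<^sup>2) / 2) + (B / e + B) * ((w1\<^sup>2 + w2\<^sup>2) / 2))"
proof -
  have "y1 * \<delta> * w2 \<ge> - (B * ((e * y1\<^sup>2 + w2\<^sup>2 / e) / 2))"
    by (rule mult_ge_neg_bound[OF \<delta> abs_mult_le_weighted_squares[OF e]])
  moreover have "w1 * \<delta> * y2 \<ge> - (B * ((e * y2\<^sup>2 + w1\<^sup>2 / e) / 2))"
    using mult_ge_neg_bound[OF \<delta> abs_mult_le_weighted_squares[OF e, of y2 w1]]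
    by (simp add: mult.commute mult.left_commute)
  moreover have "w1 * \<delta> * w2 \<ge> - (B * ((1 * w1\<^sup>2 + w2\<^sup>2 / 1) / 2))"
    by (rule mult_ge_neg_bound[OF \<delta> abs_mult_le_weighted_squares]) simp
  moreover have "B * e * ((y1\<^sup>2 + y2\<^sup>2) / 2) + (B / e + B) * ((w1\<^sup>2 + w2\<^sup>2) / 2)
      = B * ((e * y1\<^sup>2 + w2\<^sup>2 / e) / 2) + B * ((e * y2\<^sup>2 + w1\<^sup>2 / e) / 2)
        + B * ((1 * w1\<^sup>2 + w2\<^sup>2 / 1) / 2)"
    using e by (simp add: field_simps)
  moreover have "(y1 + w1) * \<delta> * (y2 + w2) = y1 * \<delta> * y2 + y1 * \<delta> * w2 + w1 * \<delta> * y2 + w1 * \<delta> * w2"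
    by (simp add: algebra_simps)
  ultimately show ?thesis by linarith
qed

lemma sum_sum_half_sum:
  fixes f :: "nat \<Rightarrow> real"
  shows "(\<Sum>c<M. \<Sum>d<M. (f c + f d) / 2) = M * (\<Sum>c<M. f c)"
proof -
  have "(\<Sum>c<M. \<Sum>d<M. (f c + f d) / 2) = ((\<Sum>c<M. \<Sum>d<M. f c) + (\<Sum>c<M. \<Sum>d<M. f d)) / 2"
    by (simp only: sum_divide_distrib[symmetric] sum.distrib)
  moreover have "(\<Sum>c<M. \<Sum>d<M. f c) = M * (\<Sum>c<M. f c)" by (simp add: sum_distrib_left)
  moreover have "(\<Sum>c<M. \<Sum>d<M. f d) = M * (\<Sum>c<M. f c)" by simp
  ultimately show ?thesis by simp
qed

lemma sum_quad_form_blocks_const: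
  fixes D :: "nat \<Rightarrow> real mat"
  assumes sum_blocks: "\<And>c d. c < M \<Longrightarrow> d < M \<Longrightarrow> (\<Sum>k<N. D k $$ (c,d)) = (if c = d then real N else 0)"
  shows "(\<Sum>k<N. quad_form M (D k) y) = N * (\<Sum>c<M. (y c)\<^sup>2)"
proof -
  have "(\<Sum>k<N. quad_form M (D k) y) = (\<Sum>c<M. \<Sum>d<M. y c * (\<Sum>k<N. D k $$ (c,d)) * y d)"
    unfolding quad_form_def by (simp add: sum.swap[of _ "{..<N}"] sum_distrib_left sum_distrib_right)
  also have "\<dots> = (\<Sum>c<M. \<Sum>d<M. if d = c then N * (y c)\<^sup>2 else 0)"
    using sum_blocks by (intro sum.cong refl) (auto simp: power2_eq_square)
  also have "\<dots> = N * (\<Sum>c<M. (y c)\<^sup>2)" by (simp add: sum_distrib_left)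
  finally show ?thesis .
qed

lemma sum_quad_form_blocks_perturbed_ge:
  fixes D :: "nat \<Rightarrow> real mat" and y :: "nat \<Rightarrow> real" and W :: "nat \<Rightarrow> nat \<Rightarrow> real"
  assumes sum_blocks: "\<And>c d. c < M \<Longrightarrow> d < M \<Longrightarrow> (\<Sum>k<N. D k $$ (c,d)) = (if c = d then real N else 0)"
    and bound: "\<And>k c d. k < N \<Longrightarrow> c < M \<Longrightarrow> d < M \<Longrightarrow> \<bar>D k $$ (c,d)\<bar> \<le> B"
    and e: "e > 0"
  shows "(\<Sum>k<N. quad_form M (D k) (\<lambda>c. y c + W k c)) \<ge> N * (\<Sum>c<M. (y c)\<^sup>2)
    - B * e * (N * (M * (\<Sum>c<M. (y c)\<^sup>2))) - (B / e + B) * (M * (\<Sum>k<N. \<Sum>c<M. (W k c)\<^sup>2))"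
proof -
  let ?E = "B * e" and ?F = "B / e + B"
  have "(\<Sum>k<N. \<Sum>c<M. \<Sum>d<M. y c * D k $$ (c,d) * y d
          - (?E * (((y c)\<^sup>2 + (y d)\<^sup>2) / 2) + ?F * (((W k c)\<^sup>2 + (W k d)\<^sup>2) / 2)))
      \<le> (\<Sum>k<N. quad_form M (D k) (\<lambda>c. y c + W k c))"
    unfolding quad_form_def using perturbed_product_lower_bound[OF bound e] by (intro sum_mono) auto
  moreover have split: "(\<Sum>k<N. \<Sum>c<M. \<Sum>d<M. y c * D k $$ (c,d) * y d
          - (?E * (((y c)\<^sup>2 + (y d)\<^sup>2) / 2) + ?F * (((W k c)\<^sup>2 + (W k d)\<^sup>2) / 2)))
      = (\<Sum>k<N. \<Sum>c<M. \<Sum>d<M. y c * D k $$ (c,d) * y d)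
        - ?E * (\<Sum>k<N. \<Sum>c<M. \<Sum>d<M. ((y c)\<^sup>2 + (y d)\<^sup>2) / 2)
        - ?F * (\<Sum>k<N. \<Sum>c<M. \<Sum>d<M. ((W k c)\<^sup>2 + (W k d)\<^sup>2) / 2)"
    by (simp only: sum_subtractf sum.distrib sum_distrib_left)
  moreover have consensus: "(\<Sum>k<N. \<Sum>c<M. \<Sum>d<M. y c * D k $$ (c,d) * y d) = N * (\<Sum>c<M. (y c)\<^sup>2)"
    using sum_quad_form_blocks_const[OF sum_blocks, where y = y] unfolding quad_form_def .
  moreover have y_squares:
    "(\<Sum>k<N. \<Sum>c<M. \<Sum>d<M. ((y c)\<^sup>2 + (y d)\<^sup>2) / 2) = N * (M * (\<Sum>c<M. (y c)\<^sup>2))"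
    by (simp add: sum_sum_half_sum)
  moreover have W_squares:
    "(\<Sum>k<N. \<Sum>c<M. \<Sum>d<M. ((W k c)\<^sup>2 + (W k d)\<^sup>2) / 2) = M * (\<Sum>k<N. \<Sum>c<M. (W k c)\<^sup>2)"
    by (simp add: sum_sum_half_sum sum_distrib_left)
  ultimately show ?thesis unfolding split consensus y_squares W_squares by simp
qed

text \<open>The blocks \<open>D k\<close> sum to \<open>N I\<close>, so on the consensus component \<open>y\<close> of \<open>Z k = y + W k\<close> they act
  like \<open>N I\<close>; choosing the weight \<open>e\<close> small, all terms involving the disagreement \<open>W\<close> are absorbed
  by a multiple of its squared norm.\<close>

lemma sum_quad_form_blocks_ge:
  fixes D :: "nat \<Rightarrow> real mat" and Z :: "nat \<Rightarrow> nat \<Rightarrow> real"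
  assumes N: "N > 0"
    and sum_blocks: "\<And>c d. c < M \<Longrightarrow> d < M \<Longrightarrow> (\<Sum>k<N. D k $$ (c,d)) = (if c = d then real N else 0)"
    and bound: "\<And>k c d. k < N \<Longrightarrow> c < M \<Longrightarrow> d < M \<Longrightarrow> \<bar>D k $$ (c,d)\<bar> \<le> B"
    and B: "B \<ge> 0"
  shows "(\<Sum>k<N. quad_form M (D k) (Z k))
     \<ge> 3 * N / 4 * (\<Sum>c<M. (average N (\<lambda>k. Z k c))\<^sup>2)
       - (4 * (B + 1)\<^sup>2 * M * (M + 1) + (B + 1) * M) * (\<Sum>c<M. spread N (\<lambda>k. Z k c))"
proof -
  define y where "y = (\<lambda>c. average N (\<lambda>k. Z k c))"
  define W where "W = (\<lambda>k c. Z k c - y c)"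
  define Sy where "Sy = (\<Sum>c<M. (y c)\<^sup>2)"
  define Sw where "Sw = (\<Sum>k<N. \<Sum>c<M. (W k c)\<^sup>2)"
  define B' where "B' = B + 1"
  have B': "B' > 0" unfolding B'_def using B by simp
  define e where "e = 1 / (4 * B' * (M + 1))"
  have e: "e > 0" unfolding e_def using B' by simp
  have bound': "\<bar>D k $$ (c,d)\<bar> \<le> B'" if "k < N" "c < M" "d < M" for k c d
    using bound[OF that] unfolding B'_def by simp
  have Sy: "Sy \<ge> 0" unfolding Sy_def by (simp add: sum_nonneg)
  have "(\<Sum>k<N. quad_form M (D k) (Z k)) = (\<Sum>k<N. quad_form M (D k) (\<lambda>c. y c + W k c))"
    unfolding W_def by simp
  also have "\<dots> \<ge> N * Sy - B' * e * (N * (M * Sy)) - (B' / e + B') * (M * Sw)"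
    unfolding Sy_def Sw_def by (rule sum_quad_form_blocks_perturbed_ge[OF sum_blocks bound' e])
  finally have main: "(\<Sum>k<N. quad_form M (D k) (Z k)) \<ge> N * Sy - B' * e * (N * (M * Sy)) - (B' / e + B') * (M * Sw)" .
  have "B' * e * (N * M) = N * M / (4 * (M + 1))" unfolding e_def using B' by simp
  also have "\<dots> \<le> N / 4" by (simp add: field_simps)
  finally have "B' * e * (N * M) * Sy \<le> N / 4 * Sy" using Sy by (rule mult_right_mono)
  then have "B' * e * (N * (M * Sy)) \<le> N / 4 * Sy" by (simp only: of_nat_mult mult.assoc)
  moreover have "(B' / e + B') * (M * Sw) = (4 * (B + 1)\<^sup>2 * M * (real M + 1) + (B + 1) * M) * Sw"
    unfolding e_def B'_def using B by (simp add: field_simps power2_eq_square)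
  moreover have Sy_eq: "(\<Sum>c<M. (average N (\<lambda>k. Z k c))\<^sup>2) = Sy" unfolding Sy_def y_def ..
  moreover have Sw_eq: "(\<Sum>c<M. spread N (\<lambda>k. Z k c)) = Sw"
    unfolding Sw_def spread_def W_def y_def by (rule sum.swap)
  ultimately show ?thesis using main unfolding Sy_eq Sw_eq by linarith
qed

lemma eventually_step_size_ratio_le:
  fixes a b \<tau>1 \<tau>2 c :: real
  assumes a: "a > 0" and b: "b > 0" and \<tau>: "\<tau>2 < \<tau>1" and c: "c > 0"
  obtains t0 :: nat where "\<And>t. t \<ge> t0 \<Longrightarrow> c * (a / (real t + 1) powr \<tau>1) \<le> b / (real t + 1) powr \<tau>2"
proof
  define d where "d = \<tau>1 - \<tau>2"
  have d: "d > 0" unfolding d_def using \<tau> by simp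
  define X where "X = c * a / b"
  have X: "X > 0" unfolding X_def using a b c by simp
  fix t :: nat assume t: "t \<ge> nat \<lceil>X powr (1 / d)\<rceil>"
  define s where "s = real t + 1"
  have s: "s > 0" unfolding s_def by simp
  have "X powr (1 / d) \<le> s"
    using t real_nat_ceiling_ge[of "X powr (1 / d)"] unfolding s_def by linarith
  then have "X \<le> s powr d"
    using X d powr_mono2[of d "X powr (1 / d)" s] by (simp add: powr_powr)
  then have "c * a \<le> b * s powr d"
    using b unfolding X_def by (simp add: divide_le_eq mult.commute)
  moreover have "s powr \<tau>1 = s powr d * s powr \<tau>2"
    unfolding d_def by (simp add: powr_add[symmetric])
  ultimately show "c * (a / (real t + 1) powr \<tau>1) \<le> b / (real t + 1) powr \<tau>2"
    unfolding s_def[symmetric] using s by (simp add: field_simps)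
qed

subsection \<open>Coercivity of the consensus + innovations matrix\<close>

lemma sum_squares_block_decomposition:
  assumes "N > 0"
  shows "(\<Sum>i<N * M. (x i)\<^sup>2)
    = N * (\<Sum>c<M. (average N (\<lambda>k. x (k * M + c)))\<^sup>2) + (\<Sum>c<M. spread N (\<lambda>k. x (k * M + c)))"
proof -
  have "(\<Sum>i<N * M. (x i)\<^sup>2) = (\<Sum>c<M. \<Sum>k<N. (x (k * M + c))\<^sup>2)"
    by (simp add: sum_lessThan_mult[of _ N M] sum.swap[of _ "{..<N}"])
  also have "\<dots> = (\<Sum>c<M. N * (average N (\<lambda>k. x (k * M + c)))\<^sup>2 + spread N (\<lambda>k. x (k * M + c)))"
    using sum_squares_eq_average_spread[OF assms] by simp
  finally show ?thesis by (simp add: sum.distrib sum_distrib_left)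
qed

lemma consensus_form_lower_bound:
  fixes L X :: "real mat" and D :: "nat \<Rightarrow> real mat"
  assumes N: "N > 0" and L: "L \<in> carrier_mat N N"
    and gap: "\<And>x. quad_form N L x \<ge> l * spread N x"
    and D: "\<And>k. k < N \<Longrightarrow> D k \<in> carrier_mat M M"
    and blocks: "\<And>Z. (\<Sum>k<N. quad_form M (D k) (Z k))
      \<ge> 3 * real N / 4 * (\<Sum>c<M. (average N (\<lambda>k. Z k c))\<^sup>2) - C * (\<Sum>c<M. spread N (\<lambda>k. Z k c))"
    and X: "X \<in> carrier_mat (N * M) (N * M)" "opnorm (X - diag_block_mat (map D [0..<N])) \<le> 1 / 2"
    and step: "\<alpha> > 0" "\<beta> \<ge> 0" "\<alpha> * (C + 1) \<le> \<beta> * l"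
    and z: "z \<in> carrier_vec (N * M)"
  shows "z \<bullet> ((\<beta> \<cdot>\<^sub>m kron L (1\<^sub>m M) + \<alpha> \<cdot>\<^sub>m X) *\<^sub>v z) \<ge> 1 / 4 * \<alpha> * (vnorm z)\<^sup>2"
proof -
  let ?P = "diag_block_mat (map D [0..<N])"
  let ?K = "kron L (1\<^sub>m M)"
  define x where "x = (\<lambda>i. z $ i)"
  define Sy where "Sy = (\<Sum>c<M. (average N (\<lambda>k. x (k * M + c)))\<^sup>2)"
  define Sw where "Sw = (\<Sum>c<M. spread N (\<lambda>k. x (k * M + c)))"
  have Sw: "Sw \<ge> 0" unfolding Sw_def by (simp add: sum_nonneg spread_nonneg)
  have P: "?P \<in> carrier_mat (N * M) (N * M)"
    using diag_block_mat_map_carrier[of "[0..<N]" D "\<lambda>_. M" "\<lambda>_. M"] D by (simp add: sum_list_triv)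
  have K: "?K \<in> carrier_mat (N * M) (N * M)" using L unfolding kron_def by simp
  have norm: "(vnorm z)\<^sup>2 = N * Sy + Sw"
    unfolding vnorm_square[OF z] Sy_def Sw_def x_def by (rule sum_squares_block_decomposition[OF N])
  have "quad_form (N * M) ?K x = (\<Sum>c<M. quad_form N L (\<lambda>k. x (k * M + c)))"
    by (rule quad_form_kron_one[OF L])
  also have "\<dots> \<ge> l * Sw" unfolding Sw_def sum_distrib_left by (intro sum_mono gap)
  finally have qK: "quad_form (N * M) ?K x \<ge> l * Sw" .
  have qP: "quad_form (N * M) ?P x \<ge> 3 * real N / 4 * Sy - C * Sw"
    using quad_form_diag_block_mat[OF D, where x = x] blocks[of "\<lambda>k c. x (k * M + c)"]
    unfolding Sy_def Sw_def by simp
  have XP: "X - ?P \<in> carrier_mat (N * M) (N * M)" by (rule minus_carrier_mat[OF P])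
  have "quad_form (N * M) (X - ?P) x \<ge> - (opnorm (X - ?P) * (vnorm z)\<^sup>2)"
    using scalar_prod_mult_mat_vec_ge_neg_opnorm[OF XP z]
    unfolding scalar_prod_mult_mat_vec_eq_quad_form[OF XP z] x_def .
  moreover have "opnorm (X - ?P) * (vnorm z)\<^sup>2 \<le> 1 / 2 * (vnorm z)\<^sup>2"
    using X by (intro mult_right_mono) auto
  ultimately have qD: "quad_form (N * M) (X - ?P) x \<ge> - (1 / 2) * (N * Sy + Sw)"
    unfolding norm by linarith
  have "z \<bullet> ((\<beta> \<cdot>\<^sub>m ?K + \<alpha> \<cdot>\<^sub>m X) *\<^sub>v z)
      = \<beta> * quad_form (N * M) ?K x + \<alpha> * quad_form (N * M) ?P x + \<alpha> * quad_form (N * M) (X - ?P) x"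
    unfolding x_def by (rule scalar_prod_smult_add_mult_mat_vec[OF K X(1) P z])
  moreover have "\<beta> * quad_form (N * M) ?K x \<ge> \<alpha> * (C + 1) * Sw"
    using mult_left_mono[OF qK step(2)] mult_right_mono[OF step(3) Sw] by (simp add: mult.assoc)
  moreover have "\<alpha> * quad_form (N * M) ?P x \<ge> \<alpha> * (3 * real N / 4 * Sy - C * Sw)"
    using qP step(1) by simp
  moreover have "\<alpha> * quad_form (N * M) (X - ?P) x \<ge> \<alpha> * (- (1 / 2) * (N * Sy + Sw))"
    using mult_left_mono[OF qD] step(1) by simp
  moreover have "\<alpha> * Sw \<ge> 0" using step(1) Sw by simp
  ultimately show ?thesis unfolding norm by (simp add: algebra_simps)
qed

lemma abs_index_le_sum_abs:
  fixes D :: "nat \<Rightarrow> real mat"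
  assumes "k < N" "c < M" "d < M"
  shows "\<bar>D k $$ (c,d)\<bar> \<le> (\<Sum>k<N. \<Sum>c<M. \<Sum>d<M. \<bar>D k $$ (c,d)\<bar>)"
proof -
  have "\<bar>D k $$ (c,d)\<bar> \<le> (\<Sum>d'<M. \<bar>D k $$ (c,d')\<bar>)"
    using assms by (intro member_le_sum) auto
  also have "\<dots> \<le> (\<Sum>c'<M. \<Sum>d'<M. \<bar>D k $$ (c',d')\<bar>)"
    using assms by (intro member_le_sum[of c _ "\<lambda>c'. \<Sum>d'<M. \<bar>D k $$ (c',d')\<bar>"]) (auto intro: sum_nonneg)
  also have "\<dots> \<le> (\<Sum>k<N. \<Sum>c<M. \<Sum>d<M. \<bar>D k $$ (c,d)\<bar>)"
    using assms by (intro member_le_sum[of k _ "\<lambda>k. \<Sum>c'<M. \<Sum>d'<M. \<bar>D k $$ (c',d')\<bar>"]) (auto intro: sum_nonneg)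
  finally show ?thesis .
qed

lemma laplacian_like_consensus_form_eventually_coercive:
  fixes L :: "real mat" and D :: "nat \<Rightarrow> real mat"
  assumes N: "N \<ge> 2" and L: "laplacian_like N L" and lam: "lambda2 L > 0"
    and D: "\<And>k. k < N \<Longrightarrow> D k \<in> carrier_mat M M"
    and sum_blocks: "\<And>c d. c < M \<Longrightarrow> d < M \<Longrightarrow> (\<Sum>k<N. D k $$ (c,d)) = (if c = d then real N else 0)"
    and ab: "a > 0" "b > 0" and \<tau>: "\<tau>2 < \<tau>1"
  obtains t0 :: nat where "\<And>t z X. t \<ge> t0 \<Longrightarrow> z \<in> carrier_vec (N * M) \<Longrightarrow> X \<in> carrier_mat (N * M) (N * M)
     \<Longrightarrow> opnorm (X - diag_block_mat (map D [0..<N])) \<le> 1 / 2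
     \<Longrightarrow> z \<bullet> ((b / (real t + 1) powr \<tau>2 \<cdot>\<^sub>m kron L (1\<^sub>m M) + a / (real t + 1) powr \<tau>1 \<cdot>\<^sub>m X) *\<^sub>v z)
        \<ge> 1 / 4 * (a / (real t + 1) powr \<tau>1) * (vnorm z)\<^sup>2"
proof -
  obtain l where l: "l > 0" "\<And>x. quad_form N L x \<ge> l * spread N x"
    using laplacian_like_spectral_gap[OF N L lam] by blast
  define B where "B = (\<Sum>k<N. \<Sum>c<M. \<Sum>d<M. \<bar>D k $$ (c,d)\<bar>)"
  have B: "B \<ge> 0" unfolding B_def by (simp add: sum_nonneg)
  have bound: "\<bar>D k $$ (c,d)\<bar> \<le> B" if "k < N" "c < M" "d < M" for k c d
    unfolding B_def using that by (rule abs_index_le_sum_abs)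
  define C where "C = 4 * (B + 1)\<^sup>2 * real M * (real M + 1) + (B + 1) * real M"
  have C: "C \<ge> 0" unfolding C_def using B by simp
  obtain t0 where t0: "\<And>t. t \<ge> t0 \<Longrightarrow> (C + 1) / l * (a / (real t + 1) powr \<tau>1) \<le> b / (real t + 1) powr \<tau>2"
    using eventually_step_size_ratio_le[OF ab \<tau>, of "(C + 1) / l"] C l(1) by auto
  have N0: "N > 0" and Lc: "L \<in> carrier_mat N N"
    using N L unfolding laplacian_like_def by auto
  show ?thesis
  proof (rule that)
    fix t :: nat and z :: "real Matrix.vec" and X :: "real mat"
    assume t: "t \<ge> t0" and z: "z \<in> carrier_vec (N * M)" and X: "X \<in> carrier_mat (N * M) (N * M)"
      and close: "opnorm (X - diag_block_mat (map D [0..<N])) \<le> 1 / 2"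
    show "z \<bullet> ((b / (real t + 1) powr \<tau>2 \<cdot>\<^sub>m kron L (1\<^sub>m M) + a / (real t + 1) powr \<tau>1 \<cdot>\<^sub>m X) *\<^sub>v z)
        \<ge> 1 / 4 * (a / (real t + 1) powr \<tau>1) * (vnorm z)\<^sup>2"
    proof (rule consensus_form_lower_bound[OF N0 Lc l(2) D _ X close _ _ _ z])
      show "(\<Sum>k<N. quad_form M (D k) (Z k))
          \<ge> 3 * real N / 4 * (\<Sum>c<M. (average N (\<lambda>k. Z k c))\<^sup>2) - C * (\<Sum>c<M. spread N (\<lambda>k. Z k c))" for Z
        unfolding C_def by (rule sum_quad_form_blocks_ge[OF N0 sum_blocks bound B])
      show "a / (real t + 1) powr \<tau>1 * (C + 1) \<le> b / (real t + 1) powr \<tau>2 * l"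
        using t0[OF t] l(1) by (simp add: field_simps)
    qed (use ab in auto)
  qed
qed

subsection \<open>Fusion gains\<close>

lemma minv_Units:
  fixes A :: "real mat"
  assumes A: "A \<in> carrier_mat n n" and U: "A \<in> Units (ring_mat TYPE(real) n ())"
  shows "minv A \<in> carrier_mat n n" "A * minv A = 1\<^sub>m n" "minv A * A = 1\<^sub>m n"
proof -
  obtain B where B: "mat_inverse A = Some B"
    using mat_inverse(1)[OF A, where b="()"] U by (cases "mat_inverse A") auto
  show "minv A \<in> carrier_mat n n" "A * minv A = 1\<^sub>m n" "minv A * A = 1\<^sub>m n"
    using mat_inverse(2)[OF A B] unfolding minv_def B by auto
qed

lemma invertible_mat_Units:
  fixes A :: "real mat"
  assumes A: "A \<in> carrier_mat n n" and inv: "invertible_mat A"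
  shows "A \<in> Units (ring_mat TYPE(real) n ())"
proof -
  obtain B where AB: "A * B = 1\<^sub>m (dim_row A)" and BA: "B * A = 1\<^sub>m (dim_row B)"
    using inv unfolding invertible_mat_def inverts_mat_def by auto
  have "B \<in> carrier_mat n n"
    using arg_cong[OF AB, of dim_col] arg_cong[OF BA, of dim_col] A by auto
  then show ?thesis unfolding Units_def ring_mat_simps using A AB BA by auto
qed

lemma pos_def_Units:
  fixes R :: "real mat"
  assumes R: "R \<in> carrier_mat n n" and pd: "pos_def R"
  shows "R \<in> Units (ring_mat TYPE(real) n ())"
proof (rule det_non_zero_imp_unit[OF R])
  show "Determinant.det R \<noteq> 0"
  proof
    assume "Determinant.det R = 0"
    then obtain v where v: "v \<in> carrier_vec n" "v \<noteq> 0\<^sub>v n" "R *\<^sub>v v = 0\<^sub>v n"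
      using det_0_iff_vec_prod_zero[OF R] by auto
    have "v \<bullet> (R *\<^sub>v v) > 0" using pd v R unfolding pos_def_def by auto
    then show False using v by simp
  qed
qed

lemma sum_minv_mult_eq_if_average:
  fixes S :: "real mat" and P :: "nat \<Rightarrow> real mat"
  assumes S: "S \<in> carrier_mat M M" "S \<in> Units (ring_mat TYPE(real) M ())"
    and P: "\<And>k. k < N \<Longrightarrow> P k \<in> carrier_mat M M"
    and avg: "\<And>e d. e < M \<Longrightarrow> d < M \<Longrightarrow> S $$ (e,d) = (1 / real N) * (\<Sum>k<N. P k $$ (e,d))"
    and N: "N > 0" and cd: "c < M" "d < M"
  shows "(\<Sum>k<N. (minv S * P k) $$ (c,d)) = (if c = d then real N else 0)"
proof -
  note Si = minv_Units[OF S]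
  have "(minv S * P k) $$ (c,d) = (\<Sum>e<M. minv S $$ (c,e) * P k $$ (e,d))" if "k < N" for k
    using Si(1) P[OF that] cd by (simp add: scalar_prod_def lessThan_atLeast0)
  then have "(\<Sum>k<N. (minv S * P k) $$ (c,d)) = (\<Sum>k<N. \<Sum>e<M. minv S $$ (c,e) * P k $$ (e,d))"
    by simp
  also have "\<dots> = (\<Sum>e<M. minv S $$ (c,e) * (real N * S $$ (e,d)))"
    using avg cd N by (subst sum.swap) (simp add: sum_distrib_left)
  also have "\<dots> = real N * (minv S * S) $$ (c,d)"
    using Si(1) S(1) cd by (simp add: scalar_prod_def lessThan_atLeast0 sum_distrib_left algebra_simps)
  also have "\<dots> = (if c = d then real N else 0)" using Si(3) cd by simp
  finally show ?thesis .
qed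

lemma fusion_gain_blocks:
  fixes H R K :: "nat \<Rightarrow> real mat" and Sigma :: "real mat"
  assumes N: "N > 0"
    and H: "\<And>n. n < N \<Longrightarrow> H n \<in> carrier_mat (m n) M"
    and R: "\<And>n. n < N \<Longrightarrow> R n \<in> carrier_mat (m n) (m n)" "\<And>n. n < N \<Longrightarrow> pos_def (R n)"
    and Sigma_def: "Sigma = Matrix.mat M M (\<lambda>ij. (1 / real N) * (\<Sum>n<N. (transpose_mat (H n) * minv (R n) * H n) $$ ij))"
    and Sigma: "invertible_mat Sigma"
    and K_def: "K = (\<lambda>n. minv Sigma * transpose_mat (H n) * minv (R n))"
  shows "\<And>n. n < N \<Longrightarrow> K n \<in> carrier_mat M (m n)"
    and "\<And>c d. c < M \<Longrightarrow> d < M \<Longrightarrow> (\<Sum>n<N. (K n * H n) $$ (c,d)) = (if c = d then real N else 0)"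
proof -
  define P where "P = (\<lambda>n. transpose_mat (H n) * minv (R n) * H n)"
  have Sc: "Sigma \<in> carrier_mat M M" unfolding Sigma_def by simp
  have SU: "Sigma \<in> Units (ring_mat TYPE(real) M ())" by (rule invertible_mat_Units[OF Sc Sigma])
  have Rinv: "\<And>n. n < N \<Longrightarrow> minv (R n) \<in> carrier_mat (m n) (m n)"
    using minv_Units(1)[OF R(1) pos_def_Units[OF R]] by blast
  show "\<And>n. n < N \<Longrightarrow> K n \<in> carrier_mat M (m n)"
    unfolding K_def using minv_Units(1)[OF Sc SU] H Rinv by (meson mult_carrier_mat transpose_carrier_mat)
  have KH: "K n * H n = minv Sigma * P n" if n: "n < N" for n
    unfolding K_def P_def
    using minv_Units(1)[OF Sc SU] H[OF n] Rinv[OF n]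
    by (simp add: assoc_mult_mat[of _ M M _ "m n"] assoc_mult_mat[of _ M "m n" _ "m n"])
  have P: "P n \<in> carrier_mat M M" if "n < N" for n
    unfolding P_def using H[OF that] Rinv[OF that] by auto
  have avg: "Sigma $$ (e,d) = (1 / real N) * (\<Sum>n<N. P n $$ (e,d))" if "e < M" "d < M" for e d
    unfolding Sigma_def P_def using that by simp
  fix c d assume cd: "c < M" "d < M"
  have "(\<Sum>n<N. (K n * H n) $$ (c,d)) = (\<Sum>n<N. (minv Sigma * P n) $$ (c,d))"
    using KH by simp
  also have "\<dots> = (if c = d then real N else 0)"
    by (rule sum_minv_mult_eq_if_average[OF Sc SU P avg N cd])
  finally show "(\<Sum>n<N. (K n * H n) $$ (c,d)) = (if c = d then real N else 0)" .
qed

theorem proposition5p5: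
  fixes N M :: nat and Md :: "nat \<Rightarrow> nat"
    and H R :: "nat \<Rightarrow> real mat"
    and G :: "(nat \<times> nat) set pmf"
    and a b \<tau>1 \<tau>2 \<epsilon>1 :: real
  assumes N2: "N \<ge> 2"
    and H_dim: "\<And>n. n < N \<Longrightarrow> H n \<in> carrier_mat (Md n) M"
    and R_dim: "\<And>n. n < N \<Longrightarrow> R n \<in> carrier_mat (Md n) (Md n)"
    and R_sym: "\<And>n. n < N \<Longrightarrow> transpose_mat (R n) = R n"
    and R_pd: "\<And>n. n < N \<Longrightarrow> pos_def (R n)"
    and Sigma_inv: "invertible_mat
          (Matrix.mat M M (\<lambda>ij. (1 / real N) *
             (\<Sum>n<N. (transpose_mat (H n) * minv (R n) * H n) $$ ij)))"
    and G_simple: "\<And>E. E \<in> set_pmf G \<Longrightarrow> simple_graph N E"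
    and lam2: "lambda2 (expected_laplacian N G) > 0"
    and ab: "a > 0" "b > 0"
    and taus: "0 < \<tau>2" "\<tau>2 \<le> \<tau>1" "\<tau>1 \<le> 1"
    and eps1: "\<epsilon>1 > 0" "\<tau>1 > \<tau>2 + 1 / (2 + \<epsilon>1) + 1 / 2"
  shows "let \<alpha> = (\<lambda>t::nat. a / (real t + 1) powr \<tau>1);
             \<beta> = (\<lambda>t::nat. b / (real t + 1) powr \<tau>2);
             Lbar = expected_laplacian N G;
             Sigma = Matrix.mat M M (\<lambda>ij. (1 / real N) *
                       (\<Sum>n<N. (transpose_mat (H n) * minv (R n) * H n) $$ ij));
             K = (\<lambda>n. minv Sigma * transpose_mat (H n) * minv (R n));
             KK = diag_block_mat (map K [0..<N]);
             HH = diag_block_mat (map H [0..<N])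
         in \<exists>\<epsilon>K > 0. \<exists>tK :: nat. \<exists>cK > 0.
              \<forall>t \<ge> tK. \<forall>z \<in> carrier_vec (N * M).
                \<forall>Kt \<in> carrier_mat (N * M) (\<Sum>n<N. Md n).
                  opnorm (Kt * HH - KK * HH) \<le> \<epsilon>K \<longrightarrow>
                  z \<bullet> ((\<beta> t \<cdot>\<^sub>m kron Lbar (1\<^sub>m M) + \<alpha> t \<cdot>\<^sub>m (Kt * HH)) *\<^sub>v z)
                    \<ge> cK * \<alpha> t * (vnorm z)\<^sup>2"
proof -
  define Sigma where "Sigma = Matrix.mat M M (\<lambda>ij. (1 / real N) *
                       (\<Sum>n<N. (transpose_mat (H n) * minv (R n) * H n) $$ ij))"
  define K where "K = (\<lambda>n. minv Sigma * transpose_mat (H n) * minv (R n))"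
  define HH where "HH = diag_block_mat (map H [0..<N])"
  have N: "N > 0" using N2 by simp
  have gains: "\<And>n. n < N \<Longrightarrow> K n \<in> carrier_mat M (Md n)"
    "\<And>c d. c < M \<Longrightarrow> d < M \<Longrightarrow> (\<Sum>n<N. (K n * H n) $$ (c,d)) = (if c = d then real N else 0)"
    using fusion_gain_blocks[OF N H_dim R_dim R_pd Sigma_def Sigma_inv[folded Sigma_def] K_def] by auto
  have KH_blocks: "K n * H n \<in> carrier_mat M M" if "n < N" for n
    using gains(1)[OF that] H_dim[OF that] by simp
  have KH: "diag_block_mat (map K [0..<N]) * HH = diag_block_mat (map (\<lambda>n. K n * H n) [0..<N])"
    unfolding HH_def using gains(1) H_dim by (intro diag_block_mat_map_mult) auto
  have HH: "HH \<in> carrier_mat (\<Sum>n<N. Md n) (N * M)"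
    using diag_block_mat_map_carrier[of "[0..<N]" H Md "\<lambda>_. M"] H_dim
    unfolding HH_def by (simp add: sum_list_triv sum.list_conv_set_nth atLeast0LessThan)
  have "0 < 1 / (2 + \<epsilon>1)" using eps1(1) by simp
  then have \<tau>: "\<tau>2 < \<tau>1" using eps1(2) by linarith
  obtain t0 where t0: "\<And>t z X. t \<ge> t0 \<Longrightarrow> z \<in> carrier_vec (N * M) \<Longrightarrow> X \<in> carrier_mat (N * M) (N * M)
     \<Longrightarrow> opnorm (X - diag_block_mat (map (\<lambda>n. K n * H n) [0..<N])) \<le> 1 / 2
     \<Longrightarrow> z \<bullet> ((b / (real t + 1) powr \<tau>2 \<cdot>\<^sub>m kron (expected_laplacian N G) (1\<^sub>m M)
            + a / (real t + 1) powr \<tau>1 \<cdot>\<^sub>m X) *\<^sub>v z)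
        \<ge> 1 / 4 * (a / (real t + 1) powr \<tau>1) * (vnorm z)\<^sup>2"
    using laplacian_like_consensus_form_eventually_coercive[where D = "\<lambda>n. K n * H n",
        OF N2 expected_laplacian_laplacian_like[OF G_simple] lam2 KH_blocks gains(2) ab \<tau>]
    by blast
  show ?thesis
    unfolding Let_def Sigma_def[symmetric] K_def[symmetric] HH_def[symmetric] KH
    using t0 HH by (intro exI[of _ "1 / 2"] exI[of _ t0] exI[of _ "1 / 4"] conjI) auto
qed

end
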